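(* Let $R$ be a ring with identity, let ${}_RM$ be a finitely generated semisimple left $R$-module and let $\varphi:M\to M$ be a nilpotent $R$-endomorphism. If $\{x_{\gamma,i}\mid\gamma\in\Gamma,1\le i\le k_\gamma\}$ and $\{y_{\delta,j}\mid\delta\in\Delta,1\le j\le l_\delta\}$ are nilpotent Jordan normal bases of ${}_RM$ with respect to $\varphi$, then there exists a bijection $\pi:\Gamma\to\Delta$ such that $k_\gamma=l_{\pi(\gamma)}$ for all $\gamma\in\Gamma$. Thus the sizes of the blocks of a nilpotent Jordan normal base are unique up to a permutation of the blocks.
   Context: For an $R$-endomorphism $\varphi$ of a left $R$-module ${}_RM$, a subset $\{x_{\gamma,i}\mid\gamma\in\Gamma,1\le i\le k_\gamma\}\subseteq M$ (with integers $k_\gamma\ge1$) is a nilpotent Jordan normal base of ${}_RM$ with respect to $\varphi$ if each submodule $Rx_{\gamma,i}$ is simple, $M=\bigoplus_{\gamma\in\Gamma,1\le i\le k_\gamma}Rx_{\gamma,i}$ is a direct sum, $\varphi(x_{\gamma,i})=x_{\gamma,i+1}$ for $1\le i<k_\gamma$, $\varphi(x_{\gamma,k_\gamma})=0$, and the set $\{k_\gamma\mid\gamma\in\Gamma\}$ is bounded. $\Gamma$ is the set of blocks and $k_\gamma$ is the size of block $\gamma$. *)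

theory Defs
  imports "HOL-Algebra.Module"
begin

(* Left modules over a (not necessarily commutative) ring with identity.
   HOL-Algebra's locale module requires a commutative ring, so we restate the
   module axioms over an arbitrary ring. *)
locale left_module = R?: ring R + M?: abelian_group M
  for R :: "('a, 'c) ring_scheme" (structure)
  and M :: "('a, 'b, 'd) module_scheme" (structure) +
  assumes smult_closed [simp, intro]:
      "\<lbrakk>a \<in> carrier R; x \<in> carrier M\<rbrakk> \<Longrightarrow> a \<odot>\<^bsub>M\<^esub> x \<in> carrier M"
    and smult_l_distr:
      "\<lbrakk>a \<in> carrier R; b \<in> carrier R; x \<in> carrier M\<rbrakk> \<Longrightarrow>
      (a \<oplus>\<^bsub>R\<^esub> b) \<odot>\<^bsub>M\<^esub> x = a \<odot>\<^bsub>M\<^esub> x \<oplus>\<^bsub>M\<^esub> b \<odot>\<^bsub>M\<^esub> x"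
    and smult_r_distr:
      "\<lbrakk>a \<in> carrier R; x \<in> carrier M; y \<in> carrier M\<rbrakk> \<Longrightarrow>
      a \<odot>\<^bsub>M\<^esub> (x \<oplus>\<^bsub>M\<^esub> y) = a \<odot>\<^bsub>M\<^esub> x \<oplus>\<^bsub>M\<^esub> a \<odot>\<^bsub>M\<^esub> y"
    and smult_assoc1:
      "\<lbrakk>a \<in> carrier R; b \<in> carrier R; x \<in> carrier M\<rbrakk> \<Longrightarrow>
      (a \<otimes>\<^bsub>R\<^esub> b) \<odot>\<^bsub>M\<^esub> x = a \<odot>\<^bsub>M\<^esub> (b \<odot>\<^bsub>M\<^esub> x)"
    and smult_one [simp]:
      "x \<in> carrier M \<Longrightarrow> \<one>\<^bsub>R\<^esub> \<odot>\<^bsub>M\<^esub> x = x"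

definition cyc :: "('a, 'c) ring_scheme \<Rightarrow> ('a, 'b, 'd) module_scheme \<Rightarrow> 'b \<Rightarrow> 'b set" where
  "cyc R M x = {a \<odot>\<^bsub>M\<^esub> x | a. a \<in> carrier R}"

definition simple_submodule :: "('a, 'c) ring_scheme \<Rightarrow> ('a, 'b, 'd) module_scheme \<Rightarrow> 'b set \<Rightarrow> bool" where
  "simple_submodule R M N \<longleftrightarrow> submodule N R M \<and> N \<noteq> {\<zero>\<^bsub>M\<^esub>} \<and>
     (\<forall>L. submodule L R M \<and> L \<subseteq> N \<longrightarrow> L = {\<zero>\<^bsub>M\<^esub>} \<or> L = N)"

definition submodule_sum :: "('a, 'b, 'd) module_scheme \<Rightarrow> ('i \<Rightarrow> 'b set) \<Rightarrow> 'i set \<Rightarrow> 'b set" where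
  "submodule_sum M N I = {finsum M f F | F f. finite F \<and> F \<subseteq> I \<and> (\<forall>i\<in>F. f i \<in> N i)}"

definition is_direct_sum :: "('a, 'b, 'd) module_scheme \<Rightarrow> ('i \<Rightarrow> 'b set) \<Rightarrow> 'i set \<Rightarrow> bool" where
  "is_direct_sum M N I \<longleftrightarrow> carrier M = submodule_sum M N I \<and>
     (\<forall>F f. finite F \<and> F \<subseteq> I \<and> (\<forall>i\<in>F. f i \<in> N i) \<and> finsum M f F = \<zero>\<^bsub>M\<^esub>
        \<longrightarrow> (\<forall>i\<in>F. f i = \<zero>\<^bsub>M\<^esub>))"

definition finitely_generated :: "('a, 'c) ring_scheme \<Rightarrow> ('a, 'b, 'd) module_scheme \<Rightarrow> bool" where
  "finitely_generated R M \<longleftrightarrow> (\<exists>S. finite S \<and> S \<subseteq> carrier M \<and>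
     carrier M = {finsum M (\<lambda>s. f s \<odot>\<^bsub>M\<^esub> s) S | f. f \<in> S \<rightarrow> carrier R})"

definition semisimple :: "('a, 'c) ring_scheme \<Rightarrow> ('a, 'b, 'd) module_scheme \<Rightarrow> bool" where
  "semisimple R M \<longleftrightarrow> (\<exists>\<S>. (\<forall>N\<in>\<S>. simple_submodule R M N) \<and> carrier M = submodule_sum M (\<lambda>N. N) \<S>)"

definition module_endo :: "('a, 'c) ring_scheme \<Rightarrow> ('a, 'b, 'd) module_scheme \<Rightarrow> ('b \<Rightarrow> 'b) \<Rightarrow> bool" where
  "module_endo R M \<phi> \<longleftrightarrow> \<phi> \<in> carrier M \<rightarrow> carrier M \<and>
     (\<forall>x\<in>carrier M. \<forall>y\<in>carrier M. \<phi> (x \<oplus>\<^bsub>M\<^esub> y) = \<phi> x \<oplus>\<^bsub>M\<^esub> \<phi> y) \<and>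
     (\<forall>a\<in>carrier R. \<forall>x\<in>carrier M. \<phi> (a \<odot>\<^bsub>M\<^esub> x) = a \<odot>\<^bsub>M\<^esub> \<phi> x)"

definition nilpotent_endo :: "('a, 'b, 'd) module_scheme \<Rightarrow> ('b \<Rightarrow> 'b) \<Rightarrow> bool" where
  "nilpotent_endo M \<phi> \<longleftrightarrow> (\<exists>n. \<forall>x\<in>carrier M. (\<phi> ^^ n) x = \<zero>\<^bsub>M\<^esub>)"

definition nilpotent_jordan_base ::
  "('a, 'c) ring_scheme \<Rightarrow> ('a, 'b, 'd) module_scheme \<Rightarrow> ('b \<Rightarrow> 'b) \<Rightarrow> 'g set \<Rightarrow> ('g \<Rightarrow> nat) \<Rightarrow> ('g \<Rightarrow> nat \<Rightarrow> 'b) \<Rightarrow> bool" where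
  "nilpotent_jordan_base R M \<phi> \<Gamma> k x \<longleftrightarrow>
     (\<forall>\<gamma>\<in>\<Gamma>. 1 \<le> k \<gamma>) \<and>
     (\<forall>\<gamma>\<in>\<Gamma>. \<forall>i\<in>{1..k \<gamma>}. x \<gamma> i \<in> carrier M \<and> simple_submodule R M (cyc R M (x \<gamma> i))) \<and>
     is_direct_sum M (\<lambda>(\<gamma>, i). cyc R M (x \<gamma> i)) {(\<gamma>, i). \<gamma> \<in> \<Gamma> \<and> i \<in> {1..k \<gamma>}} \<and>
     (\<forall>\<gamma>\<in>\<Gamma>. \<forall>i. 1 \<le> i \<and> i < k \<gamma> \<longrightarrow> \<phi> (x \<gamma> i) = x \<gamma> (Suc i)) \<and>
     (\<forall>\<gamma>\<in>\<Gamma>. \<phi> (x \<gamma> (k \<gamma>)) = \<zero>\<^bsub>M\<^esub>) \<and>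
     bdd_above (k ` \<Gamma>)"

end

theory Submission
  imports Defs "HOL-Library.Disjoint_Sets"
begin

(*
  The image phi^n M is the direct sum of the summands R x(gamma, i) with i > n, so the number of
  positions (gamma, i) with i > n is the number of simple summands in a decomposition of phi^n M.
  A Steinitz exchange argument shows that this number does not depend on the decomposition, so it
  is the same for both bases. The number of blocks of size greater than n is the difference of these
  numbers for n and n + 1; hence both bases have equally many blocks of each size, and matching
  blocks of equal size gives the bijection.
*)

section \<open>Counting blocks\<close>

abbreviation jordan_positions :: "'g set \<Rightarrow> ('g \<Rightarrow> nat) \<Rightarrow> ('g \<times> nat) set" where
  "jordan_positions \<Gamma> k \<equiv> {(\<gamma>, i). \<gamma> \<in> \<Gamma> \<and> i \<in> {1..k \<gamma>}}"

lemma finite_jordan_positions: "finite \<Gamma> \<Longrightarrow> finite (jordan_positions \<Gamma> k)"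
  by (rule finite_subset[of _ "SIGMA \<gamma>:\<Gamma>. {1..k \<gamma>}"]) auto

lemma card_jordan_positions_above_Suc:
  assumes "finite \<Gamma>"
  shows "card {p \<in> jordan_positions \<Gamma> k. n < snd p}
       = card {p \<in> jordan_positions \<Gamma> k. Suc n < snd p} + card {\<gamma> \<in> \<Gamma>. n < k \<gamma>}"
proof -
  let ?A = "\<lambda>m. {p \<in> jordan_positions \<Gamma> k. m < snd p}"
  have fin: "finite (?A n)"
    using finite_jordan_positions[OF assms] by simp
  have "?A n = ?A (Suc n) \<union> (\<lambda>\<gamma>. (\<gamma>, Suc n)) ` {\<gamma> \<in> \<Gamma>. n < k \<gamma>}"
    by auto
  moreover have "?A (Suc n) \<inter> (\<lambda>\<gamma>. (\<gamma>, Suc n)) ` {\<gamma> \<in> \<Gamma>. n < k \<gamma>} = {}"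
    by auto
  ultimately show ?thesis
    using fin by (simp add: card_Un_disjoint card_image inj_on_def)
qed

lemma card_levels_eq_if_card_jordan_positions_eq:
  assumes "finite \<Gamma>" "finite \<Delta>"
    and "\<And>n. card {p \<in> jordan_positions \<Gamma> k. n < snd p} = card {p \<in> jordan_positions \<Delta> l. n < snd p}"
  shows "card {\<gamma> \<in> \<Gamma>. n < k \<gamma>} = card {\<delta> \<in> \<Delta>. n < l \<delta>}"
  using card_jordan_positions_above_Suc[OF assms(1), of k n]
    card_jordan_positions_above_Suc[OF assms(2), of l n] assms(3)[of n] assms(3)[of "Suc n"]
  by simp

lemma card_fibre_Suc:
  assumes "finite \<Gamma>"
  shows "card {\<gamma> \<in> \<Gamma>. k \<gamma> = Suc n} = card {\<gamma> \<in> \<Gamma>. n < k \<gamma>} - card {\<gamma> \<in> \<Gamma>. Suc n < k \<gamma>}"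
proof -
  have "{\<gamma> \<in> \<Gamma>. k \<gamma> = Suc n} = {\<gamma> \<in> \<Gamma>. n < k \<gamma>} - {\<gamma> \<in> \<Gamma>. Suc n < k \<gamma>}"
    by auto
  then show ?thesis using assms by (simp add: card_Diff_subset subset_iff)
qed

lemma card_fibres_eq_if_card_levels_eq:
  fixes k :: "'g \<Rightarrow> nat" and l :: "'h \<Rightarrow> nat"
  assumes "finite \<Gamma>" "finite \<Delta>" "\<forall>\<gamma>\<in>\<Gamma>. 0 < k \<gamma>" "\<forall>\<delta>\<in>\<Delta>. 0 < l \<delta>"
    and levels: "\<And>n. card {\<gamma> \<in> \<Gamma>. n < k \<gamma>} = card {\<delta> \<in> \<Delta>. n < l \<delta>}"
  shows "card {\<gamma> \<in> \<Gamma>. k \<gamma> = m} = card {\<delta> \<in> \<Delta>. l \<delta> = m}"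
proof (cases m)
  case 0
  then have "{\<gamma> \<in> \<Gamma>. k \<gamma> = m} = {}" "{\<delta> \<in> \<Delta>. l \<delta> = m} = {}"
    using assms(3,4) by auto
  then show ?thesis by (simp only: card.empty)
next
  case (Suc n)
  then show ?thesis
    using card_fibre_Suc[OF assms(1)] card_fibre_Suc[OF assms(2)] levels by simp
qed

lemma ex_bij_betw_if_card_fibres_eq:
  assumes "finite \<Gamma>" "finite \<Delta>"
    and fibres: "\<And>m. card {\<gamma> \<in> \<Gamma>. k \<gamma> = m} = card {\<delta> \<in> \<Delta>. l \<delta> = m}"
  shows "\<exists>\<pi>. bij_betw \<pi> \<Gamma> \<Delta> \<and> (\<forall>\<gamma>\<in>\<Gamma>. k \<gamma> = l (\<pi> \<gamma>))"
proof -
  have "\<exists>f. bij_betw f {\<gamma> \<in> \<Gamma>. k \<gamma> = m} {\<delta> \<in> \<Delta>. l \<delta> = m}" for m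
    by (rule finite_same_card_bij) (use assms in auto)
  then obtain f where f: "\<And>m. bij_betw (f m) {\<gamma> \<in> \<Gamma>. k \<gamma> = m} {\<delta> \<in> \<Delta>. l \<delta> = m}"
    by metis
  define \<pi> where "\<pi> \<gamma> = f (k \<gamma>) \<gamma>" for \<gamma>
  have "bij_betw \<pi> {\<gamma> \<in> \<Gamma>. k \<gamma> = m} {\<delta> \<in> \<Delta>. l \<delta> = m}" for m
    using f[of m] by (rule bij_betw_cong[THEN iffD1, rotated]) (simp add: \<pi>_def)
  then have "bij_betw \<pi> (\<Union>m. {\<gamma> \<in> \<Gamma>. k \<gamma> = m}) (\<Union>m. {\<delta> \<in> \<Delta>. l \<delta> = m})"
    by (intro bij_betw_UNION_disjoint) (auto simp: disjoint_family_on_def)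
  moreover have "(\<Union>m. {\<gamma> \<in> \<Gamma>. k \<gamma> = m}) = \<Gamma>" "(\<Union>m. {\<delta> \<in> \<Delta>. l \<delta> = m}) = \<Delta>"
    by auto
  moreover have "k \<gamma> = l (\<pi> \<gamma>)" if "\<gamma> \<in> \<Gamma>" for \<gamma>
    using bij_betwE[OF f[of "k \<gamma>"]] that unfolding \<pi>_def by fastforce
  ultimately show ?thesis by auto
qed

section \<open>Sums of submodules\<close>

abbreviation submodule_Sum :: "('a, 'b, 'd) module_scheme \<Rightarrow> 'b set set \<Rightarrow> 'b set" where
  "submodule_Sum M A \<equiv> submodule_sum M (\<lambda>X. X) A"

context left_module
begin

lemma submodule_iff:
  "submodule H R M \<longleftrightarrow> H \<subseteq> carrier M \<and> \<zero>\<^bsub>M\<^esub> \<in> H \<and> (\<forall>a\<in>H. \<forall>b\<in>H. a \<oplus>\<^bsub>M\<^esub> b \<in> H)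
     \<and> (\<forall>a\<in>H. \<ominus>\<^bsub>M\<^esub> a \<in> H) \<and> (\<forall>r\<in>carrier R. \<forall>a\<in>H. r \<odot>\<^bsub>M\<^esub> a \<in> H)"
  unfolding submodule_def subgroup_def submodule_axioms_def a_inv_def by auto

lemma submodule_subset: "submodule H R M \<Longrightarrow> H \<subseteq> carrier M"
  unfolding submodule_iff by blast

lemma submodule_zero_closed: "submodule H R M \<Longrightarrow> \<zero>\<^bsub>M\<^esub> \<in> H"
  unfolding submodule_iff by blast

lemma submodule_add_closed: "\<lbrakk>submodule H R M; a \<in> H; b \<in> H\<rbrakk> \<Longrightarrow> a \<oplus>\<^bsub>M\<^esub> b \<in> H"
  unfolding submodule_iff by blast

lemma submodule_smult_closed: "\<lbrakk>submodule H R M; r \<in> carrier R; a \<in> H\<rbrakk> \<Longrightarrow> r \<odot>\<^bsub>M\<^esub> a \<in> H"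
  unfolding submodule_iff by blast

lemma submodule_diff_closed: "\<lbrakk>submodule H R M; a \<in> H; b \<in> H\<rbrakk> \<Longrightarrow> a \<oplus>\<^bsub>M\<^esub> \<ominus>\<^bsub>M\<^esub> b \<in> H"
  unfolding submodule_iff by blast

lemma smult_zero [simp]: "a \<in> carrier R \<Longrightarrow> a \<odot>\<^bsub>M\<^esub> \<zero>\<^bsub>M\<^esub> = \<zero>\<^bsub>M\<^esub>"
  using smult_r_distr[of a "\<zero>\<^bsub>M\<^esub>" "\<zero>\<^bsub>M\<^esub>"] by simp

lemma zero_smult [simp]: "x \<in> carrier M \<Longrightarrow> \<zero>\<^bsub>R\<^esub> \<odot>\<^bsub>M\<^esub> x = \<zero>\<^bsub>M\<^esub>"
  using smult_l_distr[of "\<zero>\<^bsub>R\<^esub>" "\<zero>\<^bsub>R\<^esub>" x] by simp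

lemma minus_one_smult:
  assumes x: "x \<in> carrier M"
  shows "(\<ominus>\<^bsub>R\<^esub> \<one>\<^bsub>R\<^esub>) \<odot>\<^bsub>M\<^esub> x = \<ominus>\<^bsub>M\<^esub> x"
proof -
  have "(\<ominus>\<^bsub>R\<^esub> \<one>\<^bsub>R\<^esub>) \<odot>\<^bsub>M\<^esub> x \<oplus>\<^bsub>M\<^esub> x = (\<ominus>\<^bsub>R\<^esub> \<one>\<^bsub>R\<^esub> \<oplus>\<^bsub>R\<^esub> \<one>\<^bsub>R\<^esub>) \<odot>\<^bsub>M\<^esub> x"
    using x by (simp add: smult_l_distr)
  also have "\<dots> = \<zero>\<^bsub>M\<^esub>"
    using x by (simp add: R.l_neg)
  finally show ?thesis
    using x by (intro M.minus_equality[symmetric]) simp_all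
qed

lemma submoduleI:
  assumes "H \<subseteq> carrier M" "\<zero>\<^bsub>M\<^esub> \<in> H" "\<And>a b. \<lbrakk>a \<in> H; b \<in> H\<rbrakk> \<Longrightarrow> a \<oplus>\<^bsub>M\<^esub> b \<in> H"
    and "\<And>r a. \<lbrakk>r \<in> carrier R; a \<in> H\<rbrakk> \<Longrightarrow> r \<odot>\<^bsub>M\<^esub> a \<in> H"
  shows "submodule H R M"
  unfolding submodule_iff using assms minus_one_smult by (metis R.a_inv_closed R.one_closed subsetD)

lemma smult_finsum:
  assumes "a \<in> carrier R" "finite F" "f \<in> F \<rightarrow> carrier M"
  shows "a \<odot>\<^bsub>M\<^esub> finsum M f F = finsum M (\<lambda>i. a \<odot>\<^bsub>M\<^esub> f i) F"
  using assms(2,3) by (induction F rule: finite_induct) (simp_all add: assms(1) smult_r_distr Pi_def)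

lemma finsum_in_add_closed:
  assumes "P \<subseteq> carrier M" "\<zero>\<^bsub>M\<^esub> \<in> P" "\<And>a b. \<lbrakk>a \<in> P; b \<in> P\<rbrakk> \<Longrightarrow> a \<oplus>\<^bsub>M\<^esub> b \<in> P"
    and "finite F" "\<forall>i\<in>F. f i \<in> P"
  shows "finsum M f F \<in> P"
  using assms(4,5)
proof (induction F rule: finite_induct)
  case (insert i F)
  then have "finsum M f (insert i F) = f i \<oplus>\<^bsub>M\<^esub> finsum M f F"
    using assms(1) by (intro M.finsum_insert) auto
  then show ?case using insert assms(3) by simp
qed (use assms(2) in simp)

lemma submodule_sum_mono: "I \<subseteq> J \<Longrightarrow> submodule_sum M N I \<subseteq> submodule_sum M N J"
  unfolding submodule_sum_def by blast

lemma finsum_in_submodule_sum: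
  "\<lbrakk>finite F; F \<subseteq> I; \<And>i. i \<in> F \<Longrightarrow> f i \<in> N i\<rbrakk> \<Longrightarrow> finsum M f F \<in> submodule_sum M N I"
  unfolding submodule_sum_def by blast

lemma in_submodule_sum:
  assumes "i \<in> I" "z \<in> N i" "N i \<subseteq> carrier M"
  shows "z \<in> submodule_sum M N I"
  using finsum_in_submodule_sum[of "{i}" I "\<lambda>_. z" N] assms by auto

lemma submodule_sum_least:
  assumes "P \<subseteq> carrier M" "\<zero>\<^bsub>M\<^esub> \<in> P" "\<And>a b. \<lbrakk>a \<in> P; b \<in> P\<rbrakk> \<Longrightarrow> a \<oplus>\<^bsub>M\<^esub> b \<in> P"
    and "\<forall>i\<in>I. N i \<subseteq> P"
  shows "submodule_sum M N I \<subseteq> P"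
  unfolding submodule_sum_def using finsum_in_add_closed[OF assms(1-3)] assms(4) by blast

lemma submodule_sum_add_closed:
  assumes sub: "\<forall>i\<in>I. submodule (N i) R M"
    and "a \<in> submodule_sum M N I" "b \<in> submodule_sum M N I"
  shows "a \<oplus>\<^bsub>M\<^esub> b \<in> submodule_sum M N I"
proof -
  obtain F f where a: "a = finsum M f F" "finite F" "F \<subseteq> I" "\<forall>i\<in>F. f i \<in> N i"
    using assms(2) unfolding submodule_sum_def by blast
  obtain G g where b: "b = finsum M g G" "finite G" "G \<subseteq> I" "\<forall>i\<in>G. g i \<in> N i"
    using assms(3) unfolding submodule_sum_def by blast
  define f' where "f' i = (if i \<in> F then f i else \<zero>\<^bsub>M\<^esub>)" for i
  define g' where "g' i = (if i \<in> G then g i else \<zero>\<^bsub>M\<^esub>)" for i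
  have f'N: "f' i \<in> N i" and g'N: "g' i \<in> N i" if "i \<in> F \<union> G" for i
    using a b sub submodule_zero_closed that unfolding f'_def g'_def by auto
  have f'c: "f' \<in> F \<union> G \<rightarrow> carrier M" and g'c: "g' \<in> F \<union> G \<rightarrow> carrier M"
    using f'N g'N a(3) b(3) sub submodule_subset by blast+
  have fin: "finite (F \<union> G)" using a(2) b(2) by blast
  have "finsum M f' (F \<union> G) = a" "finsum M g' (F \<union> G) = b"
    unfolding a(1) b(1) using f'c g'c
    by (auto simp: f'_def g'_def intro!: M.add.finprod_mono_neutral_cong_right[OF fin])
  then have "a \<oplus>\<^bsub>M\<^esub> b = finsum M (\<lambda>i. f' i \<oplus>\<^bsub>M\<^esub> g' i) (F \<union> G)"
    using M.finsum_addf[OF f'c g'c] by simp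
  also have "\<dots> \<in> submodule_sum M N I"
    using fin a(3) b(3) f'N g'N sub submodule_add_closed
    by (intro finsum_in_submodule_sum) blast+
  finally show ?thesis .
qed

lemma submodule_sum_smult_closed:
  assumes sub: "\<forall>i\<in>I. submodule (N i) R M"
    and "r \<in> carrier R" "a \<in> submodule_sum M N I"
  shows "r \<odot>\<^bsub>M\<^esub> a \<in> submodule_sum M N I"
proof -
  obtain F f where a: "a = finsum M f F" "finite F" "F \<subseteq> I" "\<forall>i\<in>F. f i \<in> N i"
    using assms(3) unfolding submodule_sum_def by blast
  have "r \<odot>\<^bsub>M\<^esub> a = finsum M (\<lambda>i. r \<odot>\<^bsub>M\<^esub> f i) F"
    unfolding a(1) using a(3,4) sub submodule_subset by (intro smult_finsum[OF assms(2) a(2)]) blast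
  also have "\<dots> \<in> submodule_sum M N I"
    using a assms(2) sub submodule_smult_closed by (intro finsum_in_submodule_sum) blast+
  finally show ?thesis .
qed

lemma submodule_sum_submodule:
  assumes "\<forall>i\<in>I. submodule (N i) R M"
  shows "submodule (submodule_sum M N I) R M"
proof (rule submoduleI)
  show "submodule_sum M N I \<subseteq> carrier M"
    using assms submodule_subset by (intro submodule_sum_least) auto
  show "\<zero>\<^bsub>M\<^esub> \<in> submodule_sum M N I"
    using finsum_in_submodule_sum[of "{}" I] by simp
qed (simp_all add: assms submodule_sum_add_closed submodule_sum_smult_closed)

lemma submodule_sum_subset_submodule:
  assumes "submodule P R M" "\<forall>i\<in>I. N i \<subseteq> P"
  shows "submodule_sum M N I \<subseteq> P"
  using assms submodule_subset submodule_zero_closed submodule_add_closed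
  by (intro submodule_sum_least) auto

lemma submodule_Sum_eq_submodule_sum:
  assumes sub: "\<forall>i\<in>I. submodule (N i) R M"
  shows "submodule_Sum M (N ` I) = submodule_sum M N I"
proof
  show "submodule_Sum M (N ` I) \<subseteq> submodule_sum M N I"
    using sub submodule_subset
    by (intro submodule_sum_subset_submodule submodule_sum_submodule) (auto intro: in_submodule_sum)
  show "submodule_sum M N I \<subseteq> submodule_Sum M (N ` I)"
    using sub submodule_subset
    by (intro submodule_sum_subset_submodule submodule_sum_submodule) (auto intro: in_submodule_sum)
qed

lemma subset_submodule_Sum: "\<lbrakk>X \<in> A; X \<subseteq> carrier M\<rbrakk> \<Longrightarrow> X \<subseteq> submodule_Sum M A"
  using in_submodule_sum[of X A _ "\<lambda>X. X"] by blast

lemma submodule_sum_insert_decomp: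
  assumes "\<forall>j\<in>insert i I. submodule (N j) R M" "z \<in> submodule_sum M N (insert i I)"
  obtains s u where "s \<in> N i" "u \<in> submodule_sum M N (I - {i})" "z = s \<oplus>\<^bsub>M\<^esub> u"
proof -
  obtain F f where z: "z = finsum M f F" "finite F" "F \<subseteq> insert i I" "\<forall>j\<in>F. f j \<in> N j"
    using assms(2) unfolding submodule_sum_def by blast
  have fc: "f \<in> F \<rightarrow> carrier M" using z(3,4) assms(1) submodule_subset by blast
  have u: "finsum M f (F - {i}) \<in> submodule_sum M N (I - {i})"
    using z by (intro finsum_in_submodule_sum) auto
  show thesis
  proof (cases "i \<in> F")
    case True
    then have "z = f i \<oplus>\<^bsub>M\<^esub> finsum M f (F - {i})"
      using z(1,2) fc M.finsum_insert[of "F - {i}" i f] by (simp add: insert_absorb Pi_iff)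
    then show thesis using that[OF _ u] z(4) True by blast
  next
    case False
    then have "z = \<zero>\<^bsub>M\<^esub> \<oplus>\<^bsub>M\<^esub> finsum M f (F - {i})"
      using z(1) fc by simp
    then show thesis using that[OF _ u] assms(1) submodule_zero_closed by blast
  qed
qed

lemma submodule_Sum_subset_carrier: "\<forall>X\<in>A. submodule X R M \<Longrightarrow> submodule_Sum M A \<subseteq> carrier M"
  by (rule submodule_subset[OF submodule_sum_submodule]) simp

lemma submodule_Sum_insert_decomp_within:
  assumes sub: "\<forall>Y\<in>insert S X. submodule Y R M" and P: "submodule P R M"
    and "z \<in> submodule_Sum M (insert S X)" "z \<in> P" "submodule_Sum M (X - {S}) \<subseteq> P"
  obtains s u where "s \<in> S" "s \<in> P" "u \<in> submodule_Sum M (X - {S})" "z = s \<oplus>\<^bsub>M\<^esub> u"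
proof -
  obtain s u where su: "s \<in> S" "u \<in> submodule_Sum M (X - {S})" "z = s \<oplus>\<^bsub>M\<^esub> u"
    using sub assms(3) by (elim submodule_sum_insert_decomp[where N = "\<lambda>X. X", rotated]) auto
  have "s \<in> carrier M"
    using su(1) sub submodule_subset by auto
  moreover have "u \<in> carrier M"
    using su(2) sub submodule_Sum_subset_carrier[of "X - {S}"] by auto
  ultimately have "s = z \<oplus>\<^bsub>M\<^esub> \<ominus>\<^bsub>M\<^esub> u" using su(3) by (simp add: M.a_assoc M.r_neg)
  then have "s \<in> P" using submodule_diff_closed[OF P] assms(4,5) su(2) by blast
  then show thesis using that su by blast
qed

end

section \<open>Independent families of simple submodules\<close>

definition independent_submodules :: "('a, 'b, 'd) module_scheme \<Rightarrow> 'b set set \<Rightarrow> bool" where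
  "independent_submodules M A \<longleftrightarrow>
     (\<forall>S\<in>A. \<forall>z\<in>S. z \<in> submodule_Sum M (A - {S}) \<longrightarrow> z = \<zero>\<^bsub>M\<^esub>)"

context left_module
begin

lemma simple_submodule_subset_if_inter:
  assumes "simple_submodule R M S" "submodule P R M" "s \<in> S" "s \<in> P" "s \<noteq> \<zero>\<^bsub>M\<^esub>"
  shows "S \<subseteq> P"
proof -
  have "submodule S R M" using assms(1) unfolding simple_submodule_def by blast
  then have "submodule (S \<inter> P) R M"
    using assms(2) unfolding submodule_iff by blast
  moreover have "S \<inter> P \<noteq> {\<zero>\<^bsub>M\<^esub>}" using assms(3-5) by blast
  ultimately have "S \<inter> P = S"
    using assms(1) unfolding simple_submodule_def by blast
  then show ?thesis by blast
qed

lemma independent_submodules_subset: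
  assumes "independent_submodules M A" "B \<subseteq> A"
  shows "independent_submodules M B"
  unfolding independent_submodules_def
proof (intro ballI impI)
  fix S z assume "S \<in> B" "z \<in> S" "z \<in> submodule_Sum M (B - {S})"
  moreover have "submodule_Sum M (B - {S}) \<subseteq> submodule_Sum M (A - {S})"
    using assms(2) by (intro submodule_sum_mono) blast
  ultimately show "z = \<zero>\<^bsub>M\<^esub>" using assms unfolding independent_submodules_def by blast
qed

lemma independent_submodules_insert:
  assumes sub: "\<forall>X\<in>B. submodule X R M" "submodule T R M"
    and ind: "independent_submodules M B"
    and T: "\<And>z. \<lbrakk>z \<in> T; z \<in> submodule_Sum M B\<rbrakk> \<Longrightarrow> z = \<zero>\<^bsub>M\<^esub>"
  shows "independent_submodules M (insert T B)"
  unfolding independent_submodules_def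
proof (intro ballI impI)
  fix X z assume X: "X \<in> insert T B" and z: "z \<in> X" "z \<in> submodule_Sum M (insert T B - {X})"
  have sum_B: "submodule (submodule_Sum M B) R M"
    using sub(1) by (intro submodule_sum_submodule) simp
  show "z = \<zero>\<^bsub>M\<^esub>"
  proof (cases "X = T")
    case True
    have "submodule_Sum M (insert T B - {X}) \<subseteq> submodule_Sum M B"
      using True by (intro submodule_sum_mono) blast
    then show ?thesis using T z True by blast
  next
    case False
    then have XB: "X \<in> B" using X by blast
    have "z \<in> submodule_Sum M (insert T (B - {X}))"
      using z(2) False by (simp add: insert_Diff_if)
    moreover have "z \<in> submodule_Sum M B"
      using XB z(1) sub(1) submodule_subset by (intro in_submodule_sum) blast+
    moreover have "submodule_Sum M (B - {X} - {T}) \<subseteq> submodule_Sum M B"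
      by (intro submodule_sum_mono) blast
    moreover have "\<forall>Y\<in>insert T (B - {X}). submodule Y R M" using sub by blast
    ultimately obtain t u where tu: "t \<in> T" "t \<in> submodule_Sum M B"
      "u \<in> submodule_Sum M (B - {X} - {T})" "z = t \<oplus>\<^bsub>M\<^esub> u"
      using submodule_Sum_insert_decomp_within[OF _ sum_B] by metis
    have "u \<in> submodule_Sum M (B - {X})"
      using tu(3) submodule_sum_mono[of "B - {X} - {T}" "B - {X}"] by blast
    moreover have "u \<in> carrier M"
      using tu(3) sub(1) submodule_Sum_subset_carrier[of "B - {X} - {T}"] by blast
    ultimately show ?thesis
      using T[OF tu(1,2)] tu(4) ind XB z(1) unfolding independent_submodules_def by simp
  qed
qed

lemma submodule_Sum_exchange:
  assumes sub: "\<forall>X\<in>A. submodule X R M" and S: "S \<in> A" "simple_submodule R M S"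
    and T: "submodule T R M" "T \<subseteq> submodule_Sum M A" "\<not> T \<subseteq> submodule_Sum M (A - {S})"
  shows "submodule_Sum M (insert T (A - {S})) = submodule_Sum M A"
proof
  let ?A' = "insert T (A - {S})"
  have sum_A: "submodule (submodule_Sum M A) R M"
    using sub by (intro submodule_sum_submodule) simp
  have sum_A': "submodule (submodule_Sum M ?A') R M"
    using sub T(1) by (intro submodule_sum_submodule) simp
  have sub_A': "X \<subseteq> submodule_Sum M ?A'" if "X \<in> ?A'" for X
    using that sub T(1) submodule_subset by (intro subset_submodule_Sum) auto
  show "submodule_Sum M ?A' \<subseteq> submodule_Sum M A"
    using T(2) sub submodule_subset subset_submodule_Sum[of _ A]
    by (intro submodule_sum_subset_submodule[OF sum_A]) auto
  \<comment> \<open>the \<open>S\<close>-component of an element of \<open>T\<close> outside \<open>\<Sum>(A - {S})\<close> is a nonzero element of \<open>S\<close>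
      lying in \<open>\<Sum>A'\<close>\<close>
  obtain t where t: "t \<in> T" "t \<notin> submodule_Sum M (A - {S})" using T(3) by blast
  have "t \<in> submodule_Sum M (insert S A)" using t(1) T(2) insert_absorb[OF S(1)] by auto
  moreover have "submodule_Sum M (A - {S}) \<subseteq> submodule_Sum M ?A'"
    by (intro submodule_sum_mono) blast
  moreover have "t \<in> submodule_Sum M ?A'" using sub_A' t(1) by blast
  moreover have "\<forall>Y\<in>insert S A. submodule Y R M" using sub S(1) by blast
  ultimately obtain s u where su: "s \<in> S" "s \<in> submodule_Sum M ?A'"
    "u \<in> submodule_Sum M (A - {S})" "t = s \<oplus>\<^bsub>M\<^esub> u"
    using submodule_Sum_insert_decomp_within[OF _ sum_A', of S A t] by metis
  moreover have "s \<noteq> \<zero>\<^bsub>M\<^esub>"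
  proof
    assume "s = \<zero>\<^bsub>M\<^esub>"
    moreover have "u \<in> carrier M"
      using su(3) sub submodule_Sum_subset_carrier[of "A - {S}"] by blast
    ultimately show False using su(3,4) t(2) by simp
  qed
  ultimately have "S \<subseteq> submodule_Sum M ?A'"
    using simple_submodule_subset_if_inter[OF S(2) sum_A'] by blast
  then show "submodule_Sum M A \<subseteq> submodule_Sum M ?A'"
    using sub_A' by (intro submodule_sum_subset_submodule[OF sum_A']) blast
qed

lemma independent_Sum_inter_remove:
  assumes sub: "\<forall>X\<in>A. submodule X R M" and ind: "independent_submodules M A"
    and "X \<subseteq> A" "S \<in> A" "z \<in> submodule_Sum M X" "z \<in> submodule_Sum M (A - {S})"
  shows "z \<in> submodule_Sum M (X - {S})"
proof (cases "S \<in> X")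
  case True
  have sum_others: "submodule (submodule_Sum M (A - {S})) R M"
    using sub by (intro submodule_sum_submodule) simp
  have "z \<in> submodule_Sum M (insert S X)" using assms(5) True by (simp add: insert_absorb)
  moreover have "submodule_Sum M (X - {S}) \<subseteq> submodule_Sum M (A - {S})"
    using assms(3) by (intro submodule_sum_mono) blast
  moreover have "\<forall>Y\<in>insert S X. submodule Y R M" using sub assms(3,4) by blast
  ultimately obtain s u where su: "s \<in> S" "s \<in> submodule_Sum M (A - {S})"
    "u \<in> submodule_Sum M (X - {S})" "z = s \<oplus>\<^bsub>M\<^esub> u"
    using submodule_Sum_insert_decomp_within[OF _ sum_others _ assms(6)] by metis
  have "s = \<zero>\<^bsub>M\<^esub>" using ind assms(4) su(1,2) unfolding independent_submodules_def by blast
  moreover have "u \<in> carrier M"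
    using su(3) sub assms(3) submodule_Sum_subset_carrier[of "X - {S}"] by blast
  ultimately show ?thesis using su(3,4) by simp
qed (use assms(5) in simp)

lemma independent_subset_Sum_Diff:
  assumes sub: "\<forall>X\<in>A. submodule X R M" and ind: "independent_submodules M A"
    and "finite D" "D \<subseteq> A" "T \<subseteq> submodule_Sum M A" "\<forall>S\<in>D. T \<subseteq> submodule_Sum M (A - {S})"
  shows "T \<subseteq> submodule_Sum M (A - D)"
  using assms(3-6)
proof (induction D rule: finite_induct)
  case (insert S D)
  have "T \<subseteq> submodule_Sum M (A - D - {S})"
  proof
    fix z assume "z \<in> T"
    moreover have "T \<subseteq> submodule_Sum M (A - D)"
      using insert.IH insert.prems by blast
    moreover have "T \<subseteq> submodule_Sum M (A - {S})" "S \<in> A"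
      using insert.prems by blast+
    ultimately show "z \<in> submodule_Sum M (A - D - {S})"
      using independent_Sum_inter_remove[OF sub ind, of "A - D" S z] by blast
  qed
  moreover have "A - D - {S} = A - insert S D" by blast
  ultimately show ?case by simp
qed simp

lemma simple_not_subset_Sum_others:
  assumes "independent_submodules M B" "T \<in> B" "simple_submodule R M T"
  shows "\<not> T \<subseteq> submodule_Sum M (B - {T})"
proof
  assume T: "T \<subseteq> submodule_Sum M (B - {T})"
  have "z = \<zero>\<^bsub>M\<^esub>" if "z \<in> T" for z
    using assms(1,2) that T[THEN subsetD, OF that] unfolding independent_submodules_def by blast
  moreover have "\<zero>\<^bsub>M\<^esub> \<in> T"
    using assms(3) submodule_zero_closed unfolding simple_submodule_def by blast
  ultimately show False
    using assms(3) unfolding simple_submodule_def by blast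
qed

lemma independent_simple_subset_eq:
  assumes "\<forall>X\<in>A. simple_submodule R M X" "independent_submodules M A"
    and "B \<subseteq> A" "submodule_Sum M A = submodule_Sum M B"
  shows "A = B"
proof (rule ccontr)
  assume "A \<noteq> B"
  then obtain S where S: "S \<in> A" "S \<notin> B" using assms(3) by blast
  have "S \<subseteq> submodule_Sum M A"
    using S(1) assms(1) submodule_subset unfolding simple_submodule_def
    by (intro subset_submodule_Sum) auto
  also have "\<dots> \<subseteq> submodule_Sum M (A - {S})"
    using assms(3,4) S(2) submodule_sum_mono[of B "A - {S}"] by blast
  finally show False
    using simple_not_subset_Sum_others[OF assms(2) S(1)] assms(1) S(1) by blast
qed

lemma exchangeable_summand:
  assumes sub: "\<forall>X\<in>A. submodule X R M" and "finite A" "independent_submodules M A"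
    and "independent_submodules M B" "T \<in> B" "simple_submodule R M T"
    and "T \<notin> A" "T \<subseteq> submodule_Sum M A"
  obtains S where "S \<in> A" "S \<notin> B" "\<not> T \<subseteq> submodule_Sum M (A - {S})"
proof (rule ccontr)
  assume "\<not> thesis"
  then have "\<forall>S\<in>A - B. T \<subseteq> submodule_Sum M (A - {S})" using that by blast
  then have "T \<subseteq> submodule_Sum M (A - (A - B))"
    using assms(2,8) by (intro independent_subset_Sum_Diff[OF sub assms(3)]) auto
  also have "\<dots> \<subseteq> submodule_Sum M (B - {T})"
    using assms(7) by (intro submodule_sum_mono) blast
  finally show False using simple_not_subset_Sum_others[OF assms(4-6)] by blast
qed

lemma independent_submodules_exchange:
  assumes sub: "\<forall>X\<in>A. submodule X R M" and "independent_submodules M A"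
    and "simple_submodule R M T" "\<not> T \<subseteq> submodule_Sum M (A - {S})"
  shows "independent_submodules M (insert T (A - {S}))"
proof (rule independent_submodules_insert)
  show "independent_submodules M (A - {S})"
    using assms(2) by (rule independent_submodules_subset) blast
  have "submodule (submodule_Sum M (A - {S})) R M"
    using sub by (intro submodule_sum_submodule) simp
  then show "z = \<zero>\<^bsub>M\<^esub>" if "z \<in> T" "z \<in> submodule_Sum M (A - {S})" for z
    using simple_submodule_subset_if_inter[OF assms(3) _ that] assms(4) by blast
qed (use sub assms(3) in \<open>auto simp: simple_submodule_def\<close>)

lemma card_independent_simple_submodules_eq:
  assumes "finite A" "\<forall>X\<in>A. simple_submodule R M X" "independent_submodules M A"
    and "finite B" "\<forall>X\<in>B. simple_submodule R M X" "independent_submodules M B"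
    and "submodule_Sum M A = submodule_Sum M B"
  shows "card A = card B"
  using assms(1-3,7)
proof (induction "card (A - B)" arbitrary: A rule: less_induct)
  case less
  have sub_A: "\<forall>X\<in>A. submodule X R M" and sub_B: "\<forall>X\<in>B. submodule X R M"
    using less.prems(2) assms(5) unfolding simple_submodule_def by blast+
  show ?case
  proof (cases "B \<subseteq> A")
    case True
    then show ?thesis using independent_simple_subset_eq[OF less.prems(2,3) True less.prems(4)] by simp
  next
    case False
    then obtain T where T: "T \<in> B" "T \<notin> A" by blast
    have T_simple: "simple_submodule R M T" using assms(5) T(1) by blast
    have T_sub: "T \<subseteq> submodule_Sum M A"
      using T(1) sub_B submodule_subset less.prems(4) by (auto dest: subset_submodule_Sum)
    obtain S where S: "S \<in> A" "S \<notin> B" "\<not> T \<subseteq> submodule_Sum M (A - {S})"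
      using exchangeable_summand[OF sub_A less.prems(1,3) assms(6) T(1) T_simple T(2) T_sub] .
    define A' where "A' = insert T (A - {S})"
    have "card (A' - B) < card (A - B)"
      unfolding A'_def using less.prems(1) S(1,2) T(1) by (intro psubset_card_mono) auto
    moreover have "finite A'" "\<forall>X\<in>A'. simple_submodule R M X"
      unfolding A'_def using less.prems(1,2) T_simple by auto
    moreover have "independent_submodules M A'"
      unfolding A'_def using sub_A less.prems(3) T_simple S(3) by (rule independent_submodules_exchange)
    moreover have "submodule_Sum M A' = submodule_Sum M B"
    proof -
      have "simple_submodule R M S" "submodule T R M"
        using less.prems(2) S(1) T_simple unfolding simple_submodule_def by blast+
      then show ?thesis
        unfolding A'_def using submodule_Sum_exchange[OF sub_A S(1) _ _ T_sub S(3)] less.prems(4)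
        by simp
    qed
    ultimately have "card A' = card B" by (rule less.hyps)
    moreover have "card A' = card A"
      unfolding A'_def using less.prems(1) S(1) T(2)
      by (metis DiffD1 card_Suc_Diff1 card_insert_disjoint finite_Diff)
    ultimately show ?thesis by simp
  qed
qed

end

section \<open>Direct sums\<close>

context left_module
begin

lemma direct_sum_inter_others:
  assumes ds: "is_direct_sum M N I" and sub: "\<forall>i\<in>I. submodule (N i) R M" and "p \<in> I"
    and z: "z \<in> N p" "z \<in> submodule_sum M N (I - {p})"
  shows "z = \<zero>\<^bsub>M\<^esub>"
proof -
  obtain G h where h: "z = finsum M h G" "finite G" "G \<subseteq> I - {p}" "\<forall>i\<in>G. h i \<in> N i"
    using z(2) unfolding submodule_sum_def by blast
  have zc: "z \<in> carrier M" using z(1) sub \<open>p \<in> I\<close> submodule_subset by blast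
  have hc: "h \<in> G \<rightarrow> carrier M" using h(3,4) sub submodule_subset by blast
  \<comment> \<open>\<open>(\<ominus> z) + z = 0\<close> is a relation among the summands indexed by \<open>insert p G\<close>\<close>
  define h' where "h' = h(p := \<ominus>\<^bsub>M\<^esub> z)"
  have p: "p \<notin> G" using h(3) by blast
  have h'G: "finsum M h' G = finsum M h G"
    using p hc by (intro M.finsum_cong') (auto simp: h'_def)
  have h'c: "h' \<in> G \<rightarrow> carrier M" "h' p \<in> carrier M"
    using p hc zc by (auto simp: h'_def)
  have "finsum M h' (insert p G) = h' p \<oplus>\<^bsub>M\<^esub> finsum M h' G"
    by (rule M.finsum_insert[OF h(2) p h'c])
  also have "\<dots> = \<ominus>\<^bsub>M\<^esub> z \<oplus>\<^bsub>M\<^esub> finsum M h G"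
    by (simp only: h'G) (simp add: h'_def)
  also have "\<dots> = \<zero>\<^bsub>M\<^esub>" using h(1) zc by (simp add: M.l_neg)
  finally have "finsum M h' (insert p G) = \<zero>\<^bsub>M\<^esub>" .
  moreover have "\<forall>i\<in>insert p G. h' i \<in> N i"
    using h(4) z(1) sub \<open>p \<in> I\<close> unfolding h'_def submodule_iff by auto
  moreover have "finite (insert p G)" "insert p G \<subseteq> I"
    using h(2,3) \<open>p \<in> I\<close> by auto
  ultimately have "h' p = \<zero>\<^bsub>M\<^esub>"
    using ds unfolding is_direct_sum_def by blast
  then have "\<ominus>\<^bsub>M\<^esub> z = \<zero>\<^bsub>M\<^esub>" by (simp add: h'_def)
  then show ?thesis using zc by (metis M.minus_minus M.minus_equality M.zero_closed M.r_zero)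
qed

lemma direct_sum_simple_inj_on:
  assumes ds: "is_direct_sum M N I" and simple: "\<forall>i\<in>I. simple_submodule R M (N i)"
  shows "inj_on N I"
proof (rule inj_onI, rule ccontr)
  fix p q assume pq: "p \<in> I" "q \<in> I" "N p = N q" "p \<noteq> q"
  have sub: "\<forall>i\<in>I. submodule (N i) R M" using simple unfolding simple_submodule_def by blast
  obtain z where z: "z \<in> N p" "z \<noteq> \<zero>\<^bsub>M\<^esub>"
    using simple pq(1) submodule_zero_closed unfolding simple_submodule_def by blast
  have "z \<in> submodule_sum M N (I - {p})"
    using pq z(1) sub submodule_subset by (intro in_submodule_sum[of q]) auto
  then show False using direct_sum_inter_others[OF ds sub pq(1) z(1)] z(2) by blast
qed

lemma direct_sum_simple_independent:
  assumes ds: "is_direct_sum M N I" and simple: "\<forall>i\<in>I. simple_submodule R M (N i)" and "J \<subseteq> I"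
  shows "independent_submodules M (N ` J)"
  unfolding independent_submodules_def
proof (intro ballI impI)
  fix X z assume "X \<in> N ` J" and z: "z \<in> X" "z \<in> submodule_Sum M (N ` J - {X})"
  then obtain p where p: "p \<in> J" "X = N p" by blast
  have sub: "\<forall>i\<in>I. submodule (N i) R M" using simple unfolding simple_submodule_def by blast
  have "inj_on N J"
    using direct_sum_simple_inj_on[OF ds simple] \<open>J \<subseteq> I\<close> by (rule inj_on_subset)
  then have "N ` J - {X} = N ` (J - {p})"
    using p by (simp add: inj_on_image_set_diff)
  moreover have "\<forall>i\<in>J - {p}. submodule (N i) R M" using sub \<open>J \<subseteq> I\<close> by blast
  ultimately have "z \<in> submodule_sum M N (J - {p})"
    using z(2) submodule_Sum_eq_submodule_sum[of "J - {p}" N] by simp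
  then have "z \<in> submodule_sum M N (I - {p})"
    using submodule_sum_mono[of "J - {p}" "I - {p}"] \<open>J \<subseteq> I\<close> by blast
  then show "z = \<zero>\<^bsub>M\<^esub>"
    using direct_sum_inter_others[OF ds sub] p z(1) \<open>J \<subseteq> I\<close> by blast
qed

lemma finitely_generated_subset_submodule:
  assumes "finite S" "carrier M = {finsum M (\<lambda>s. f s \<odot>\<^bsub>M\<^esub> s) S | f. f \<in> S \<rightarrow> carrier R}"
    and "submodule P R M" "S \<subseteq> P"
  shows "carrier M \<subseteq> P"
proof
  fix z assume "z \<in> carrier M"
  then obtain f where "f \<in> S \<rightarrow> carrier R" "z = finsum M (\<lambda>s. f s \<odot>\<^bsub>M\<^esub> s) S"
    using assms(2) by blast
  moreover have "finsum M (\<lambda>s. f s \<odot>\<^bsub>M\<^esub> s) S \<in> P" if "f \<in> S \<rightarrow> carrier R" for f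
    using assms(1,3,4) that submodule_smult_closed[OF assms(3)]
    by (intro finsum_in_add_closed) (auto dest: submodule_subset submodule_zero_closed
        intro: submodule_add_closed)
  ultimately show "z \<in> P" by blast
qed

lemma finite_direct_sum_index:
  assumes fg: "finitely_generated R M" and ds: "is_direct_sum M N I"
    and sub: "\<forall>i\<in>I. submodule (N i) R M" and nonzero: "\<forall>i\<in>I. N i \<noteq> {\<zero>\<^bsub>M\<^esub>}"
  shows "finite I"
proof -
  obtain S where S: "finite S" "S \<subseteq> carrier M"
    "carrier M = {finsum M (\<lambda>s. f s \<odot>\<^bsub>M\<^esub> s) S | f. f \<in> S \<rightarrow> carrier R}"
    using fg unfolding finitely_generated_def by blast
  have "\<exists>F. finite F \<and> F \<subseteq> I \<and> s \<in> submodule_sum M N F" if "s \<in> S" for s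
  proof -
    have "s \<in> submodule_sum M N I" using that S(2) ds unfolding is_direct_sum_def by blast
    then show ?thesis unfolding submodule_sum_def by blast
  qed
  then obtain Fs where Fs: "\<And>s. s \<in> S \<Longrightarrow> finite (Fs s) \<and> Fs s \<subseteq> I \<and> s \<in> submodule_sum M N (Fs s)"
    by metis
  \<comment> \<open>the finitely many summands needed for the generators already span \<open>M\<close>\<close>
  define F where "F = (\<Union>s\<in>S. Fs s)"
  have F: "finite F" "F \<subseteq> I" unfolding F_def using S(1) Fs by auto
  have "S \<subseteq> submodule_sum M N F"
    using Fs submodule_sum_mono[of "Fs s" F for s] unfolding F_def by blast
  then have span: "carrier M \<subseteq> submodule_sum M N F"
    using S(1,3) sub F(2) by (intro finitely_generated_subset_submodule submodule_sum_submodule) auto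
  have "I \<subseteq> F"
  proof
    fix i assume "i \<in> I"
    show "i \<in> F"
    proof (rule ccontr)
      assume "i \<notin> F"
      then have "N i \<subseteq> submodule_sum M N (I - {i})"
        using span submodule_sum_mono[of F "I - {i}"] F(2) sub \<open>i \<in> I\<close> submodule_subset by blast
      then have "N i \<subseteq> {\<zero>\<^bsub>M\<^esub>}"
        using direct_sum_inter_others[OF ds sub \<open>i \<in> I\<close>] by blast
      then show False using nonzero sub \<open>i \<in> I\<close> submodule_zero_closed by blast
    qed
  qed
  then show ?thesis using F(1) by (rule finite_subset)
qed

end

section \<open>Endomorphisms and nilpotent Jordan normal bases\<close>

abbreviation jordan_summand ::
  "('a, 'c) ring_scheme \<Rightarrow> ('a, 'b, 'd) module_scheme \<Rightarrow> ('g \<Rightarrow> nat \<Rightarrow> 'b) \<Rightarrow> 'g \<times> nat \<Rightarrow> 'b set" where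
  "jordan_summand R M x \<equiv> \<lambda>(\<gamma>, i). cyc R M (x \<gamma> i)"

context left_module
begin

lemma module_endo_closed: "\<lbrakk>module_endo R M f; x \<in> carrier M\<rbrakk> \<Longrightarrow> f x \<in> carrier M"
  unfolding module_endo_def by blast

lemma module_endo_add:
  "\<lbrakk>module_endo R M f; x \<in> carrier M; y \<in> carrier M\<rbrakk> \<Longrightarrow> f (x \<oplus>\<^bsub>M\<^esub> y) = f x \<oplus>\<^bsub>M\<^esub> f y"
  unfolding module_endo_def by blast

lemma module_endo_smult:
  "\<lbrakk>module_endo R M f; a \<in> carrier R; x \<in> carrier M\<rbrakk> \<Longrightarrow> f (a \<odot>\<^bsub>M\<^esub> x) = a \<odot>\<^bsub>M\<^esub> f x"
  unfolding module_endo_def by blast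

lemma module_endo_zero:
  assumes "module_endo R M f"
  shows "f \<zero>\<^bsub>M\<^esub> = \<zero>\<^bsub>M\<^esub>"
proof -
  have "f \<zero>\<^bsub>M\<^esub> \<in> carrier M" "f \<zero>\<^bsub>M\<^esub> \<oplus>\<^bsub>M\<^esub> f \<zero>\<^bsub>M\<^esub> = f \<zero>\<^bsub>M\<^esub>"
    using assms unfolding module_endo_def by (auto dest: bspec[of _ _ "\<zero>\<^bsub>M\<^esub>"])
  then show ?thesis using M.add.l_cancel_one by simp
qed

lemma module_endo_funpow:
  assumes "module_endo R M f"
  shows "module_endo R M (f ^^ n)"
proof (induction n)
  case (Suc n)
  then show ?case using assms unfolding module_endo_def by (auto simp: Pi_iff)
qed (simp add: module_endo_def)

lemma module_endo_finsum:
  assumes "module_endo R M f" "finite F" "g \<in> F \<rightarrow> carrier M"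
  shows "f (finsum M g F) = finsum M (\<lambda>i. f (g i)) F"
  using assms(2,3)
proof (induction F rule: finite_induct)
  case (insert i F)
  have "f (g i) \<in> carrier M" "(\<lambda>i. f (g i)) \<in> F \<rightarrow> carrier M"
    using insert.prems assms(1) unfolding module_endo_def by auto
  then show ?case
    using insert assms(1) M.finsum_closed[of g F] unfolding module_endo_def by (simp add: Pi_iff)
qed (use module_endo_zero[OF assms(1)] in simp)

lemma module_endo_image_submodule:
  assumes "module_endo R M f"
  shows "submodule (f ` carrier M) R M"
proof (rule submoduleI)
  show "f ` carrier M \<subseteq> carrier M" using module_endo_closed[OF assms] by (rule image_subsetI)
  have "\<zero>\<^bsub>M\<^esub> = f \<zero>\<^bsub>M\<^esub>" using module_endo_zero[OF assms] by simp
  then show "\<zero>\<^bsub>M\<^esub> \<in> f ` carrier M" by (rule image_eqI) simp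
  show "a \<oplus>\<^bsub>M\<^esub> b \<in> f ` carrier M" if a: "a \<in> f ` carrier M" and b: "b \<in> f ` carrier M" for a b
  proof -
    obtain a' b' where ab: "a = f a'" "a' \<in> carrier M" "b = f b'" "b' \<in> carrier M"
      using a b by (elim imageE)
    then have "a \<oplus>\<^bsub>M\<^esub> b = f (a' \<oplus>\<^bsub>M\<^esub> b')" using module_endo_add[OF assms] by simp
    then show ?thesis using ab(2,4) by (rule image_eqI[OF _ M.add.m_closed])
  qed
  show "r \<odot>\<^bsub>M\<^esub> a \<in> f ` carrier M" if r: "r \<in> carrier R" and a: "a \<in> f ` carrier M" for r a
  proof -
    obtain a' where a': "a = f a'" "a' \<in> carrier M" using a by (rule imageE)
    then have "r \<odot>\<^bsub>M\<^esub> a = f (r \<odot>\<^bsub>M\<^esub> a')" using module_endo_smult[OF assms r] by simp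
    then show ?thesis using r a'(2) by (rule image_eqI[OF _ smult_closed])
  qed
qed

lemma module_endo_image_submodule_sum:
  assumes "module_endo R M f" "\<forall>i\<in>I. N i \<subseteq> carrier M"
    and "submodule P R M" "\<forall>i\<in>I. f ` N i \<subseteq> P"
  shows "f ` submodule_sum M N I \<subseteq> P"
proof
  fix w assume "w \<in> f ` submodule_sum M N I"
  then obtain F g where w: "w = f (finsum M g F)" "finite F" "F \<subseteq> I" "\<forall>i\<in>F. g i \<in> N i"
    unfolding submodule_sum_def by blast
  have "g \<in> F \<rightarrow> carrier M" using w(3,4) assms(2) by auto
  then have "w = finsum M (\<lambda>i. f (g i)) F"
    unfolding w(1) by (rule module_endo_finsum[OF assms(1) w(2)])
  moreover have "f (g i) \<in> P" if "i \<in> F" for i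
    using assms(4) w(3,4) that by (meson image_subset_iff subsetD)
  ultimately show "w \<in> P"
    using w(2) submodule_subset[OF assms(3)] submodule_zero_closed[OF assms(3)]
      submodule_add_closed[OF assms(3)] by (simp add: finsum_in_add_closed)
qed

lemma nilpotent_jordan_base_funpow:
  assumes jb: "nilpotent_jordan_base R M \<phi> \<Gamma> k x" and endo: "module_endo R M \<phi>"
    and "\<gamma> \<in> \<Gamma>" "1 \<le> i" "i \<le> k \<gamma>"
  shows "(\<phi> ^^ n) (x \<gamma> i) = (if i + n \<le> k \<gamma> then x \<gamma> (i + n) else \<zero>\<^bsub>M\<^esub>)"
proof (induction n)
  case (Suc n)
  show ?case
  proof (cases "i + n < k \<gamma>")
    case True
    then have "\<phi> (x \<gamma> (i + n)) = x \<gamma> (Suc (i + n))"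
      using jb \<open>\<gamma> \<in> \<Gamma>\<close> \<open>1 \<le> i\<close> unfolding nilpotent_jordan_base_def by simp
    then show ?thesis using Suc True by simp
  next
    case False
    have "\<phi> (x \<gamma> (k \<gamma>)) = \<zero>\<^bsub>M\<^esub>"
      using jb \<open>\<gamma> \<in> \<Gamma>\<close> unfolding nilpotent_jordan_base_def by blast
    then show ?thesis
      using Suc False module_endo_zero[OF endo] by (cases "i + n = k \<gamma>") auto
  qed
qed (use assms(5) in simp)

lemma nilpotent_jordan_base_simple:
  assumes "nilpotent_jordan_base R M \<phi> \<Gamma> k x" "p \<in> jordan_positions \<Gamma> k"
  shows "simple_submodule R M (jordan_summand R M x p)"
  using assms unfolding nilpotent_jordan_base_def by auto

lemma nilpotent_jordan_base_carrier:
  "\<lbrakk>nilpotent_jordan_base R M \<phi> \<Gamma> k x; \<gamma> \<in> \<Gamma>; 1 \<le> i; i \<le> k \<gamma>\<rbrakk> \<Longrightarrow> x \<gamma> i \<in> carrier M"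
  unfolding nilpotent_jordan_base_def by auto

lemma image_funpow_jordan_summand:
  assumes jb: "nilpotent_jordan_base R M \<phi> \<Gamma> k x" and endo: "module_endo R M \<phi>"
    and "\<gamma> \<in> \<Gamma>" "1 \<le> i" "i \<le> k \<gamma>"
  shows "(\<phi> ^^ n) ` jordan_summand R M x (\<gamma>, i)
       \<subseteq> submodule_sum M (jordan_summand R M x) {p \<in> jordan_positions \<Gamma> k. n < snd p}"
    (is "_ \<subseteq> ?P")
proof
  have sub: "submodule (jordan_summand R M x p) R M" if "p \<in> jordan_positions \<Gamma> k" for p
    using nilpotent_jordan_base_simple[OF jb that] unfolding simple_submodule_def by blast
  fix w assume "w \<in> (\<phi> ^^ n) ` jordan_summand R M x (\<gamma>, i)"
  then obtain a where a: "a \<in> carrier R" "w = (\<phi> ^^ n) (a \<odot>\<^bsub>M\<^esub> x \<gamma> i)"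
    unfolding cyc_def by auto
  then have "w = (if i + n \<le> k \<gamma> then a \<odot>\<^bsub>M\<^esub> x \<gamma> (i + n) else \<zero>\<^bsub>M\<^esub>)"
    using module_endo_smult[OF module_endo_funpow[OF endo] a(1)]
      nilpotent_jordan_base_carrier[OF jb assms(3-5)]
      nilpotent_jordan_base_funpow[OF jb endo assms(3-5)] by simp
  moreover have "a \<odot>\<^bsub>M\<^esub> x \<gamma> (i + n) \<in> ?P" if "i + n \<le> k \<gamma>"
  proof (rule in_submodule_sum)
    show "(\<gamma>, i + n) \<in> {p \<in> jordan_positions \<Gamma> k. n < snd p}"
      using that assms(3,4) by auto
    then show "jordan_summand R M x (\<gamma>, i + n) \<subseteq> carrier M" using sub submodule_subset by auto
  qed (use a(1) in \<open>auto simp: cyc_def\<close>)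
  moreover have "\<zero>\<^bsub>M\<^esub> \<in> ?P"
    using sub by (intro submodule_zero_closed submodule_sum_submodule) auto
  ultimately show "w \<in> ?P" by auto
qed

lemma jordan_summand_subset_image_funpow:
  assumes jb: "nilpotent_jordan_base R M \<phi> \<Gamma> k x" and endo: "module_endo R M \<phi>"
    and "\<gamma> \<in> \<Gamma>" "i \<le> k \<gamma>" "n < i"
  shows "jordan_summand R M x (\<gamma>, i) \<subseteq> (\<phi> ^^ n) ` carrier M"
proof
  fix z assume "z \<in> jordan_summand R M x (\<gamma>, i)"
  then obtain a where a: "a \<in> carrier R" "z = a \<odot>\<^bsub>M\<^esub> x \<gamma> i" unfolding cyc_def by auto
  have j: "1 \<le> i - n" "i - n \<le> k \<gamma>" using assms(4,5) by auto
  note x = nilpotent_jordan_base_carrier[OF jb assms(3) j]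
  have "z = (\<phi> ^^ n) (a \<odot>\<^bsub>M\<^esub> x \<gamma> (i - n))"
    using a module_endo_smult[OF module_endo_funpow[OF endo] a(1) x]
      nilpotent_jordan_base_funpow[OF jb endo assms(3) j, of n] assms(4,5) by simp
  moreover have "a \<odot>\<^bsub>M\<^esub> x \<gamma> (i - n) \<in> carrier M" using a(1) x by simp
  ultimately show "z \<in> (\<phi> ^^ n) ` carrier M" by (rule image_eqI)
qed

lemma image_funpow_nilpotent_jordan_base:
  assumes jb: "nilpotent_jordan_base R M \<phi> \<Gamma> k x" and endo: "module_endo R M \<phi>"
  shows "(\<phi> ^^ n) ` carrier M
       = submodule_sum M (jordan_summand R M x) {p \<in> jordan_positions \<Gamma> k. n < snd p}"
    (is "_ = ?P")
proof
  let ?N = "jordan_summand R M x"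
  have sub: "submodule (?N p) R M" if "p \<in> jordan_positions \<Gamma> k" for p
    using nilpotent_jordan_base_simple[OF jb that] unfolding simple_submodule_def by blast
  have endo_n: "module_endo R M (\<phi> ^^ n)" by (rule module_endo_funpow[OF endo])
  have "(\<phi> ^^ n) ` submodule_sum M ?N (jordan_positions \<Gamma> k) \<subseteq> ?P"
    using image_funpow_jordan_summand[OF jb endo] sub submodule_subset
    by (intro module_endo_image_submodule_sum[OF endo_n] submodule_sum_submodule) auto
  moreover have "carrier M = submodule_sum M ?N (jordan_positions \<Gamma> k)"
    using jb unfolding nilpotent_jordan_base_def is_direct_sum_def by blast
  ultimately show "(\<phi> ^^ n) ` carrier M \<subseteq> ?P" by simp
  show "?P \<subseteq> (\<phi> ^^ n) ` carrier M"
    using jordan_summand_subset_image_funpow[OF jb endo]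
    by (intro submodule_sum_subset_submodule module_endo_image_submodule[OF endo_n]) auto
qed

lemma finite_nilpotent_jordan_base:
  assumes fg: "finitely_generated R M" and jb: "nilpotent_jordan_base R M \<phi> \<Gamma> k x"
  shows "finite (jordan_positions \<Gamma> k)" "finite \<Gamma>"
proof -
  have simple: "\<forall>p\<in>jordan_positions \<Gamma> k. simple_submodule R M (jordan_summand R M x p)"
    using nilpotent_jordan_base_simple[OF jb] by blast
  show fin: "finite (jordan_positions \<Gamma> k)"
  proof (rule finite_direct_sum_index[OF fg])
    show "is_direct_sum M (jordan_summand R M x) (jordan_positions \<Gamma> k)"
      using jb unfolding nilpotent_jordan_base_def by blast
  qed (use simple in \<open>simp_all add: simple_submodule_def\<close>)
  have "\<gamma> \<in> fst ` jordan_positions \<Gamma> k" if "\<gamma> \<in> \<Gamma>" for \<gamma>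
  proof
    show "(\<gamma>, 1) \<in> jordan_positions \<Gamma> k"
      using jb that unfolding nilpotent_jordan_base_def by simp
  qed simp
  then show "finite \<Gamma>" using fin by (meson finite_surj subsetI)
qed

lemma nilpotent_jordan_base_summands_above:
  fixes n :: nat
  assumes fg: "finitely_generated R M" and endo: "module_endo R M \<phi>"
    and jb: "nilpotent_jordan_base R M \<phi> \<Gamma> k x"
  defines "A \<equiv> jordan_summand R M x ` {p \<in> jordan_positions \<Gamma> k. n < snd p}"
  shows "finite A" "\<forall>X\<in>A. simple_submodule R M X" "independent_submodules M A"
    "submodule_Sum M A = (\<phi> ^^ n) ` carrier M"
    "card A = card {p \<in> jordan_positions \<Gamma> k. n < snd p}"
proof -
  let ?N = "jordan_summand R M x" and ?I = "jordan_positions \<Gamma> k"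
  let ?J = "{p \<in> ?I. n < snd p}"
  have simple: "\<forall>p\<in>?I. simple_submodule R M (?N p)"
    using nilpotent_jordan_base_simple[OF jb] by blast
  have ds: "is_direct_sum M ?N ?I" using jb unfolding nilpotent_jordan_base_def by blast
  show "finite A"
    unfolding A_def using finite_nilpotent_jordan_base(1)[OF fg jb] by simp
  show "\<forall>X\<in>A. simple_submodule R M X" unfolding A_def using simple by auto
  show "independent_submodules M A"
    unfolding A_def by (rule direct_sum_simple_independent[OF ds simple]) auto
  have "submodule_Sum M A = submodule_sum M ?N ?J"
    unfolding A_def using simple unfolding simple_submodule_def
    by (intro submodule_Sum_eq_submodule_sum) auto
  then show "submodule_Sum M A = (\<phi> ^^ n) ` carrier M"
    using image_funpow_nilpotent_jordan_base[OF jb endo, of n] by simp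
  have "inj_on ?N ?J"
    using direct_sum_simple_inj_on[OF ds simple] by (rule inj_on_subset) auto
  then show "card A = card ?J" unfolding A_def by (rule card_image)
qed

lemma card_jordan_positions_above_eq:
  assumes "finitely_generated R M" "module_endo R M \<phi>"
    and "nilpotent_jordan_base R M \<phi> \<Gamma> k x" "nilpotent_jordan_base R M \<phi> \<Delta> l y"
  shows "card {p \<in> jordan_positions \<Gamma> k. n < snd p} = card {p \<in> jordan_positions \<Delta> l. n < snd p}"
proof -
  note x = nilpotent_jordan_base_summands_above[OF assms(1-3), of n]
  note y = nilpotent_jordan_base_summands_above[OF assms(1,2,4), of n]
  have "card (jordan_summand R M x ` {p \<in> jordan_positions \<Gamma> k. n < snd p})
      = card (jordan_summand R M y ` {p \<in> jordan_positions \<Delta> l. n < snd p})"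
    using x(4) y(4) by (intro card_independent_simple_submodules_eq[OF x(1-3) y(1-3)]) simp
  then show ?thesis using x(5) y(5) by simp
qed

end

theorem proposition2p2:
  fixes R :: "('a, 'c) ring_scheme" and M :: "('a, 'b, 'd) module_scheme"
    and \<phi> :: "'b \<Rightarrow> 'b"
    and \<Gamma> :: "'g set" and k :: "'g \<Rightarrow> nat" and x :: "'g \<Rightarrow> nat \<Rightarrow> 'b"
    and \<Delta> :: "'h set" and l :: "'h \<Rightarrow> nat" and y :: "'h \<Rightarrow> nat \<Rightarrow> 'b"
  assumes "left_module R M"
    and "finitely_generated R M"
    and "semisimple R M"
    and "module_endo R M \<phi>"
    and "nilpotent_endo M \<phi>"
    and "nilpotent_jordan_base R M \<phi> \<Gamma> k x"
    and "nilpotent_jordan_base R M \<phi> \<Delta> l y"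
  shows "\<exists>\<pi>. bij_betw \<pi> \<Gamma> \<Delta> \<and> (\<forall>\<gamma>\<in>\<Gamma>. k \<gamma> = l (\<pi> \<gamma>))"
proof -
  interpret left_module R M by (rule assms(1))
  have fin: "finite \<Gamma>" "finite \<Delta>"
    using finite_nilpotent_jordan_base(2) assms(2,6,7) by blast+
  have pos: "\<forall>\<gamma>\<in>\<Gamma>. 0 < k \<gamma>" "\<forall>\<delta>\<in>\<Delta>. 0 < l \<delta>"
    using assms(6,7) unfolding nilpotent_jordan_base_def by auto
  have "card {p \<in> jordan_positions \<Gamma> k. n < snd p} = card {p \<in> jordan_positions \<Delta> l. n < snd p}"
    for n using card_jordan_positions_above_eq[OF assms(2,4,6,7)] .
  then have "card {\<gamma> \<in> \<Gamma>. n < k \<gamma>} = card {\<delta> \<in> \<Delta>. n < l \<delta>}" for n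
    by (rule card_levels_eq_if_card_jordan_positions_eq[OF fin])
  then have "card {\<gamma> \<in> \<Gamma>. k \<gamma> = m} = card {\<delta> \<in> \<Delta>. l \<delta> = m}" for m
    by (rule card_fibres_eq_if_card_levels_eq[OF fin pos])
  then show ?thesis by (rule ex_bij_betw_if_card_fibres_eq[OF fin])
qed

end
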